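(* Let $x_1,x_2,y_1,y_2\in\mathbb{R}$, $d>0$, $\eta>0$, $\sigma^2>0$, $R>0$, $\tilde\epsilon=\frac{\sigma^2}{\eta}(e^R-1)$ and $\tilde\tau_m=\tilde\epsilon(y_m^2+d^2)$. Consider $$\min_{P_1,P_2,x\in\mathbb{R}}\ P_1+P_2\quad\text{s.t.}\quad -P_2+\frac{\tilde\epsilon\eta}{\sigma^2}P_1+\tilde\epsilon(x-x_2)^2+\tilde\tau_2\le0,\qquad -P_1+\tilde\epsilon(x-x_1)^2+\tilde\tau_1\le0.$$ Its optimal solution is $$x^*=\frac{x_2}{e^R+1}+\frac{e^Rx_1}{e^R+1},\quad P_1^*=\tilde\epsilon(x^*-x_1)^2+\tilde\tau_1,\quad P_2^*=\frac{\tilde\epsilon\eta}{\sigma^2}P_1^*+\tilde\epsilon(x^*-x_2)^2+\tilde\tau_2.$$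
   Context: This is a relaxed total-power-minimization problem for two-user NOMA with a pinching antenna at $(x,0,d)$, where user 1 performs successive interference cancellation; the constraints encode that user 2's rate and user 1's own rate are at least $R$. *)

theory Defs
  imports Complex_Main
begin

text \<open>Feasible set of the relaxed power-minimization problem; a point is (P1, P2, x).
  eps is tilde-epsilon, tau1/tau2 are tilde-tau_1, tilde-tau_2.\<close>
definition feasible ::
  "real \<Rightarrow> real \<Rightarrow> real \<Rightarrow> real \<Rightarrow> real \<Rightarrow> real \<Rightarrow> real \<Rightarrow> real \<Rightarrow> real \<Rightarrow> real \<Rightarrow> bool" where
  "feasible eps eta sigma2 x1 x2 tau1 tau2 P1 P2 x \<longleftrightarrow>
     - P2 + (eps * eta / sigma2) * P1 + eps * (x - x2)^2 + tau2 \<le> 0 \<and>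
     - P1 + eps * (x - x1)^2 + tau1 \<le> 0"

definition optimal ::
  "real \<Rightarrow> real \<Rightarrow> real \<Rightarrow> real \<Rightarrow> real \<Rightarrow> real \<Rightarrow> real \<Rightarrow> real \<Rightarrow> real \<Rightarrow> real \<Rightarrow> bool" where
  "optimal eps eta sigma2 x1 x2 tau1 tau2 P1 P2 x \<longleftrightarrow>
     feasible eps eta sigma2 x1 x2 tau1 tau2 P1 P2 x \<and>
     (\<forall>Q1 Q2 z. feasible eps eta sigma2 x1 x2 tau1 tau2 Q1 Q2 z \<longrightarrow> P1 + P2 \<le> Q1 + Q2)"

end

theory Submission
  imports Defs
begin

text \<open>With w = 1 + eps eta / sigma2 (= e^R), the objective P1 + P2 equals the claimed optimal
  value plus eps (w + 1) (x - x*)^2, plus w times the slack of the second constraint, plus the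
  slack of the first. On the feasible set all three terms are nonnegative, and they vanish
  together exactly at (P1*, P2*, x*). The quadratic term arises because x* is the w : 1 weighted
  mean of x1 and x2, so the two squared distances combine by the parallel-axis identity.\<close>

lemma weighted_sum_squares_decomp:
  fixes a b u v z :: "'a::field"
  assumes "a + b \<noteq> 0"
  defines "m \<equiv> (a * u + b * v) / (a + b)"
  shows "a * (z - u)^2 + b * (z - v)^2 = a * (m - u)^2 + b * (m - v)^2 + (a + b) * (z - m)^2"
proof -
  have centred: "a * (m - u) + b * (m - v) = 0"
    using assms(1) unfolding m_def by (simp add: field_simps)
  have "a * (z - u)^2 + b * (z - v)^2 - (a * (m - u)^2 + b * (m - v)^2 + (a + b) * (z - m)^2)
      = 2 * (z - m) * (a * (m - u) + b * (m - v))"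
    by (simp add: algebra_simps power2_eq_square)
  then show ?thesis
    using centred by simp
qed

lemma objective_slack_decomp:
  fixes eps eta sigma2 x1 x2 tau1 tau2 w P1 P2 x :: real
  assumes "w + 1 \<noteq> 0" and "w = 1 + eps * eta / sigma2"
  defines "xs \<equiv> (w * x1 + x2) / (w + 1)"
  defines "P1s \<equiv> eps * (xs - x1)^2 + tau1"
  defines "P2s \<equiv> (eps * eta / sigma2) * P1s + eps * (xs - x2)^2 + tau2"
  shows "P1 + P2 = P1s + P2s + eps * (w + 1) * (x - xs)^2
           + w * (P1 - eps * (x - x1)^2 - tau1)
           + (P2 - (eps * eta / sigma2) * P1 - eps * (x - x2)^2 - tau2)"
proof -
  have "w * (x - x1)^2 + 1 * (x - x2)^2 = w * (xs - x1)^2 + 1 * (xs - x2)^2 + (w + 1) * (x - xs)^2"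
    using weighted_sum_squares_decomp[of w 1 x x1 x2] assms(1) unfolding xs_def by simp
  then have "eps * (w * (x - x1)^2 + (x - x2)^2)
      = eps * (w * (xs - x1)^2 + (xs - x2)^2 + (w + 1) * (x - xs)^2)"
    by simp
  then show ?thesis
    unfolding P2s_def P1s_def assms(2) by (simp add: algebra_simps)
qed

lemma optimal_iff_weighted_mean:
  fixes eps eta sigma2 x1 x2 tau1 tau2 w P1 P2 x :: real
  assumes "eps > 0" and "w > 0" and "w = 1 + eps * eta / sigma2"
  defines "xs \<equiv> (w * x1 + x2) / (w + 1)"
  defines "P1s \<equiv> eps * (xs - x1)^2 + tau1"
  defines "P2s \<equiv> (eps * eta / sigma2) * P1s + eps * (xs - x2)^2 + tau2"
  shows "optimal eps eta sigma2 x1 x2 tau1 tau2 P1 P2 x \<longleftrightarrow> (P1, P2, x) = (P1s, P2s, xs)"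
proof -
  have decomp: "Q1 + Q2 = P1s + P2s + eps * (w + 1) * (z - xs)^2
      + w * (Q1 - eps * (z - x1)^2 - tau1)
      + (Q2 - (eps * eta / sigma2) * Q1 - eps * (z - x2)^2 - tau2)" for Q1 Q2 z
    using objective_slack_decomp[where ?P1.0 = Q1 and ?P2.0 = Q2 and x = z] assms(2,3)
    unfolding xs_def P1s_def P2s_def by simp
  have distance_term_nonneg: "eps * (w + 1) * (z - xs)^2 \<ge> 0" for z
    using assms(1,2) by simp
  have lower_bound: "P1s + P2s \<le> Q1 + Q2"
    if "feasible eps eta sigma2 x1 x2 tau1 tau2 Q1 Q2 z" for Q1 Q2 z
    using that decomp[of Q1 Q2 z] distance_term_nonneg[of z] assms(2)
    unfolding feasible_def by (smt (verit) mult_nonneg_nonneg)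
  have feasible_star: "feasible eps eta sigma2 x1 x2 tau1 tau2 P1s P2s xs"
    unfolding feasible_def P2s_def P1s_def by simp
  show ?thesis
  proof
    assume opt: "optimal eps eta sigma2 x1 x2 tau1 tau2 P1 P2 x"
    then have feas: "feasible eps eta sigma2 x1 x2 tau1 tau2 P1 P2 x"
      and "P1 + P2 \<le> P1s + P2s"
      using feasible_star unfolding optimal_def by blast+
    then have slack1: "w * (P1 - eps * (x - x1)^2 - tau1) = 0"
      and slack2: "P2 - (eps * eta / sigma2) * P1 - eps * (x - x2)^2 - tau2 = 0"
      and "eps * (w + 1) * (x - xs)^2 = 0"
      using decomp[of P1 P2 x] distance_term_nonneg[of x] assms(2)
      unfolding feasible_def by (smt (verit) mult_nonneg_nonneg)+
    then have "x = xs"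
      using assms(1,2) by simp
    moreover have "P1 = P1s"
      using slack1 assms(2) \<open>x = xs\<close> unfolding P1s_def by simp
    moreover have "P2 = P2s"
      using slack2 \<open>x = xs\<close> \<open>P1 = P1s\<close> unfolding P2s_def by simp
    ultimately show "(P1, P2, x) = (P1s, P2s, xs)"
      by simp
  next
    assume "(P1, P2, x) = (P1s, P2s, xs)"
    then show "optimal eps eta sigma2 x1 x2 tau1 tau2 P1 P2 x"
      using feasible_star lower_bound unfolding optimal_def by auto
  qed
qed

theorem lemma5:
  fixes x1 x2 y1 y2 d eta sigma2 R :: real
  assumes "d > 0" and "eta > 0" and "sigma2 > 0" and "R > 0"
  defines "eps \<equiv> sigma2 / eta * (exp R - 1)"
  defines "tau1 \<equiv> eps * (y1^2 + d^2)"
  defines "tau2 \<equiv> eps * (y2^2 + d^2)"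
  defines "xs \<equiv> x2 / (exp R + 1) + exp R * x1 / (exp R + 1)"
  defines "P1s \<equiv> eps * (xs - x1)^2 + tau1"
  defines "P2s \<equiv> (eps * eta / sigma2) * P1s + eps * (xs - x2)^2 + tau2"
  shows "optimal eps eta sigma2 x1 x2 tau1 tau2 P1s P2s xs \<and>
         (\<forall>P1 P2 x. optimal eps eta sigma2 x1 x2 tau1 tau2 P1 P2 x \<longrightarrow>
            (P1, P2, x) = (P1s, P2s, xs))"
proof -
  have "exp R > 1"
    using assms(4) by simp
  then have eps_pos: "eps > 0"
    using assms(2,3) unfolding eps_def by simp
  have weight: "exp R = 1 + eps * eta / sigma2"
    using assms(2,3) unfolding eps_def by simp
  have "xs = (exp R * x1 + x2) / (exp R + 1)"
    unfolding xs_def by (simp add: add_divide_distrib)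
  then have "optimal eps eta sigma2 x1 x2 tau1 tau2 P1 P2 x \<longleftrightarrow> (P1, P2, x) = (P1s, P2s, xs)"
    for P1 P2 x
    using optimal_iff_weighted_mean[OF eps_pos exp_gt_zero weight] unfolding P1s_def P2s_def
    by simp
  then show ?thesis
    by blast
qed

end
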